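(* Let $P\ll Q$ be probability measures on $(\mathcal X,\mathcal F)$, let $\gamma>1$, and let $f:(0,\infty)\to\mathbb R$ be convex with $f(1)=0$, differentiable at $1$ and $\gamma$, with $f'(\gamma)>f'(1)$. Then for every $E\in\mathcal F$, $$P(E)\le\gamma\,Q(E)+\frac{D_f(P\Vert Q)}{f'(\gamma)-f'(1)}.$$
   Context: For convex $f$ on $(0,\infty)$ extended by $f(0):=\lim_{t\downarrow0}f(t)$ and $P\ll Q$, $D_f(P\Vert Q):=\int f(\mathrm dP/\mathrm dQ)\,\mathrm dQ$. *)

theory Defs
  imports "HOL-Probability.Probability"
begin

text \<open>Extension of f from (0,inf) to [0,inf): for t > 0 the value f t, at 0 the
  (extended-real) right limit of f at 0, which exists for convex f and may be +inf.\<close>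
definition fext :: "(real \<Rightarrow> real) \<Rightarrow> real \<Rightarrow> ereal" where
  "fext f t = (if t > 0 then ereal (f t) else Lim (at_right 0) (\<lambda>s. ereal (f s)))"

definition fdiv :: "(real \<Rightarrow> real) \<Rightarrow> 'a measure \<Rightarrow> 'a measure \<Rightarrow> ereal" where
  "fdiv f P Q =
     (let g = (\<lambda>x. fext f (enn2real (RN_deriv Q P x)))
      in enn2ereal (\<integral>\<^sup>+ x. e2ennreal (g x) \<partial>Q) - enn2ereal (\<integral>\<^sup>+ x. e2ennreal (- g x) \<partial>Q))"

end

(* Convexity puts f above its tangents at 1 and at gamma, hence on [0, inf) (at 0 through the
   limit defining the extension) above the hinge
     phi t = f'(1) (t - 1) + (f'(gamma) - f'(1)) max 0 (t - gamma).
   Integrating phi at the density r = dP/dQ, the linear part vanishes since the integral of r is 1,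
   so D_f(P||Q) >= (f'(gamma) - f'(1)) E_Q[(r - gamma)+] >= (f'(gamma) - f'(1)) (P E - gamma Q E). *)
theory Submission
  imports Defs
begin

lemma convex_on_open_above_tangent:
  fixes f :: "real \<Rightarrow> real"
  assumes "convex_on S f" "open S" "connected S" "c \<in> S" "x \<in> S"
    and "(f has_real_derivative d) (at c)"
  shows "f c + d * (x - c) \<le> f x"
proof -
  have "f x - f c \<ge> d * (x - c)"
  proof (rule convex_on_imp_above_tangent[OF assms(1,3)])
    show "c \<in> interior S" using assms(2,4) by (simp add: interior_open)
    show "(f has_real_derivative d) (at c within S)"
      using assms(6) by (rule has_field_derivative_at_within)
  qed fact
  then show ?thesis by simp
qed

lemma tendsto_at_right_SUP_antimono:
  fixes g :: "real \<Rightarrow> 'b::{complete_linorder, linorder_topology}"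
  assumes "a < b" and antimono: "\<And>s u. a < s \<Longrightarrow> s \<le> u \<Longrightarrow> u < b \<Longrightarrow> g u \<le> g s"
  shows "(g \<longlongrightarrow> (SUP s\<in>{a<..<b}. g s)) (at_right a)"
proof (rule order_tendstoI)
  fix y assume "y < (SUP s\<in>{a<..<b}. g s)"
  then obtain s0 where s0: "a < s0" "s0 < b" "y < g s0"
    by (auto simp: less_SUP_iff)
  have "y < g s" if "a < s" "s < s0" for s
    using antimono[of s s0] that s0 by (auto intro: less_le_trans)
  then show "\<forall>\<^sub>F s in at_right a. y < g s"
    unfolding eventually_at_right_field using s0(1) by blast
next
  fix y assume "(SUP s\<in>{a<..<b}. g s) < y"
  then have "g s < y" if "a < s" "s < b" for s
    using le_less_trans[OF SUP_upper[of s "{a<..<b}" g]] that by auto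
  then show "\<forall>\<^sub>F s in at_right a. g s < y"
    unfolding eventually_at_right_field using assms(1) by blast
qed

text \<open>At 0 the tangent bound survives in the limit: the excess of f over its tangent at m is
  convex, nonnegative and zero at m, hence antitone on (0, m], so its right limit at 0 exists
  and is nonnegative.\<close>
lemma fext_ge_tangent:
  fixes f :: "real \<Rightarrow> real"
  assumes cv: "convex_on {0<..} f" and "m > 0" and deriv: "(f has_real_derivative d) (at m)"
    and "t \<ge> 0"
  shows "ereal (f m + d * (t - m)) \<le> fext f t"
proof (cases "t > 0")
  case True
  then show ?thesis
    using convex_on_open_above_tangent[OF cv _ _ _ _ deriv] \<open>m > 0\<close> by (simp add: fext_def)
next
  case False
  with \<open>t \<ge> 0\<close> have "t = 0" by simp
  define g where "g s = f s - (f m + d * (s - m))" for s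
  have g_nonneg: "0 \<le> g s" if "s > 0" for s
    using convex_on_open_above_tangent[OF cv _ _ _ _ deriv] \<open>m > 0\<close> that by (simp add: g_def)
  have "convex_on {0<..} g"
    unfolding g_def
  proof (intro convex_on_diff cv)
    show "concave_on {0<..} (\<lambda>s. f m + d * (s - m))"
      unfolding concave_on_def by (rule convex_onI) (auto simp: algebra_simps)
  qed
  then have antimono: "g u \<le> g s" if "0 < s" "s \<le> u" "u < m" for s u
  proof -
    have "g u \<le> max (g s) (g m)"
      using that by (intro convex_on_le_max convex_on_subset[OF \<open>convex_on {0<..} g\<close>]) auto
    then show ?thesis using g_nonneg[OF \<open>0 < s\<close>] by (simp add: g_def)
  qed
  define S where "S = (SUP s\<in>{0<..<m}. ereal (g s))"
  have "((\<lambda>s. ereal (g s)) \<longlongrightarrow> S) (at_right 0)"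
    unfolding S_def using \<open>m > 0\<close> antimono by (intro tendsto_at_right_SUP_antimono) auto
  moreover have "((\<lambda>s. ereal (f m + d * (s - m))) \<longlongrightarrow> ereal (f m + d * (0 - m))) (at_right 0)"
    by (intro tendsto_intros)
  ultimately have "((\<lambda>s. ereal (g s) + ereal (f m + d * (s - m))) \<longlongrightarrow>
      S + ereal (f m + d * (0 - m))) (at_right 0)"
    by (intro tendsto_add_ereal_general1) simp_all
  then have "((\<lambda>s. ereal (f s)) \<longlongrightarrow> S + ereal (f m + d * (0 - m))) (at_right 0)"
    by (simp add: g_def)
  then have fext_eq: "fext f t = S + ereal (f m + d * (t - m))"
    using \<open>t = 0\<close> by (simp add: fext_def tendsto_Lim)
  have "0 \<le> S"
    unfolding S_def using g_nonneg[of "m / 2"] \<open>m > 0\<close> by (intro SUP_upper2[of "m / 2"]) auto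
  then have "ereal (f m + d * (t - m)) \<le> S + ereal (f m + d * (t - m))"
    by (rule add_increasing) simp
  then show ?thesis by (simp only: fext_eq)
qed

lemma fext_ge_hinge:
  fixes f :: "real \<Rightarrow> real"
  assumes cv: "convex_on {0<..} f" and "f 1 = 0" and "\<gamma> > 1"
    and d1: "(f has_real_derivative d1) (at 1)"
    and d\<gamma>: "(f has_real_derivative d\<gamma>) (at \<gamma>)"
    and "t \<ge> 0"
  shows "ereal (d1 * (t - 1) + (d\<gamma> - d1) * max 0 (t - \<gamma>)) \<le> fext f t"
proof (cases "t \<le> \<gamma>")
  case True
  then show ?thesis using fext_ge_tangent[OF cv _ d1 \<open>t \<ge> 0\<close>] \<open>f 1 = 0\<close> by simp
next
  case False
  have "d1 * (\<gamma> - 1) \<le> f \<gamma>"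
    using convex_on_open_above_tangent[OF cv _ _ _ _ d1] \<open>f 1 = 0\<close> \<open>\<gamma> > 1\<close> by simp
  then have "ereal (d1 * (t - 1) + (d\<gamma> - d1) * max 0 (t - \<gamma>)) \<le> ereal (f \<gamma> + d\<gamma> * (t - \<gamma>))"
    using False by (simp add: algebra_simps)
  also have "\<dots> \<le> fext f t"
    using \<open>\<gamma> > 1\<close> by (intro fext_ge_tangent[OF cv _ d\<gamma> \<open>t \<ge> 0\<close>]) simp
  finally show ?thesis .
qed

lemma integral_le_nn_integral_parts:
  fixes g :: "'a \<Rightarrow> ereal"
  assumes int: "integrable M \<phi>" and le: "\<And>x. x \<in> space M \<Longrightarrow> ereal (\<phi> x) \<le> g x"
  shows "ereal (\<integral>x. \<phi> x \<partial>M)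
    \<le> enn2ereal (\<integral>\<^sup>+x. e2ennreal (g x) \<partial>M) - enn2ereal (\<integral>\<^sup>+x. e2ennreal (- g x) \<partial>M)"
proof -
  define A where "A = (\<integral>\<^sup>+x. ennreal (\<phi> x) \<partial>M)"
  define B where "B = (\<integral>\<^sup>+x. ennreal (- \<phi> x) \<partial>M)"
  have "A < \<top>" "B < \<top>"
    using int by (auto simp: A_def B_def real_integrable_def less_top[symmetric])
  moreover have "enn2ereal X = ereal (enn2real X)" if "X < \<top>" for X :: ennreal
    using ennreal_enn2real[OF that] enn2ereal_ennreal[OF enn2real_nonneg] by metis
  ultimately have "ereal (\<integral>x. \<phi> x \<partial>M) = enn2ereal A - enn2ereal B"
    using real_lebesgue_integral_def[OF int] by (simp add: A_def B_def)
  also have "\<dots> \<le> enn2ereal (\<integral>\<^sup>+x. e2ennreal (g x) \<partial>M) - enn2ereal (\<integral>\<^sup>+x. e2ennreal (- g x) \<partial>M)"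
  proof (intro ereal_minus_mono)
    have "A \<le> (\<integral>\<^sup>+x. e2ennreal (g x) \<partial>M)"
      unfolding A_def using le by (intro nn_integral_mono) (metis e2ennreal_ereal e2ennreal_mono)
    then show "enn2ereal A \<le> enn2ereal (\<integral>\<^sup>+x. e2ennreal (g x) \<partial>M)"
      by (simp add: less_eq_ennreal.rep_eq)
    have "(\<integral>\<^sup>+x. e2ennreal (- g x) \<partial>M) \<le> B"
      unfolding B_def using le
      by (intro nn_integral_mono) (metis e2ennreal_ereal e2ennreal_mono ereal_minus_le_minus uminus_ereal.simps(1))
    then show "enn2ereal (\<integral>\<^sup>+x. e2ennreal (- g x) \<partial>M) \<le> enn2ereal B"
      by (simp add: less_eq_ennreal.rep_eq)
  qed
  finally show ?thesis .
qed

lemma fdiv_ge_integral: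
  assumes "\<And>t. t \<ge> 0 \<Longrightarrow> ereal (\<phi> t) \<le> fext f t"
    and "integrable Q (\<lambda>x. \<phi> (enn2real (RN_deriv Q P x)))"
  shows "ereal (\<integral>x. \<phi> (enn2real (RN_deriv Q P x)) \<partial>Q) \<le> fdiv f P Q"
  unfolding fdiv_def Let_def using assms by (intro integral_le_nn_integral_parts) auto

lemma (in finite_measure) integral_indicator_diff_le_excess:
  fixes r :: "'a \<Rightarrow> real"
  assumes "integrable M r" and "E \<in> sets M"
  shows "(\<integral>x. r x * indicator E x \<partial>M) - \<gamma> * measure M E \<le> (\<integral>x. max 0 (r x - \<gamma>) \<partial>M)"
proof -
  have int_r: "integrable M (\<lambda>x. r x * indicator E x)"
    using integrable_mult_indicator[OF assms(2,1)] by (simp add: mult.commute)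
  have int_\<gamma>: "integrable M (\<lambda>x. \<gamma> * indicator E x :: real)"
    using assms(2) by (intro integrable_mult_right integrable_real_indicator) (auto simp: less_top[symmetric])
  have "(\<integral>x. r x * indicator E x \<partial>M) - \<gamma> * measure M E
      = (\<integral>x. r x * indicator E x - \<gamma> * indicator E x \<partial>M)"
    using int_r int_\<gamma> assms(2) by simp
  also have "\<dots> \<le> (\<integral>x. max 0 (r x - \<gamma>) \<partial>M)"
    using int_r int_\<gamma> assms(1) by (intro integral_mono) (auto split: split_indicator)
  finally show ?thesis .
qed

lemma (in prob_space) fdiv_ge_excess:
  fixes P :: "'a measure" and f :: "real \<Rightarrow> real"
  defines "r \<equiv> \<lambda>x. enn2real (RN_deriv M P x)"
  assumes int_r: "integrable M r" and "(\<integral>x. r x \<partial>M) = 1"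
    and "convex_on {0<..} f" "f 1 = 0" "\<gamma> > 1"
    and "(f has_real_derivative d1) (at 1)" "(f has_real_derivative d\<gamma>) (at \<gamma>)"
  shows "ereal ((d\<gamma> - d1) * (\<integral>x. max 0 (r x - \<gamma>) \<partial>M)) \<le> fdiv f P M"
proof -
  define \<phi> where "\<phi> t = d1 * (t - 1) + (d\<gamma> - d1) * max 0 (t - \<gamma>)" for t
  have int_excess: "integrable M (\<lambda>x. max 0 (r x - \<gamma>))"
    using int_r by auto
  have "(\<integral>x. \<phi> (r x) \<partial>M) = d1 * ((\<integral>x. r x \<partial>M) - 1) + (d\<gamma> - d1) * (\<integral>x. max 0 (r x - \<gamma>) \<partial>M)"
    unfolding \<phi>_def using int_r int_excess by (simp add: prob_space)
  also have "\<dots> = (d\<gamma> - d1) * (\<integral>x. max 0 (r x - \<gamma>) \<partial>M)"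
    using \<open>(\<integral>x. r x \<partial>M) = 1\<close> by simp
  finally have "(\<integral>x. \<phi> (r x) \<partial>M) = (d\<gamma> - d1) * (\<integral>x. max 0 (r x - \<gamma>) \<partial>M)" .
  moreover have "ereal (\<integral>x. \<phi> (r x) \<partial>M) \<le> fdiv f P M"
    unfolding r_def using assms(4-) int_r int_excess
    by (intro fdiv_ge_integral) (auto simp: \<phi>_def r_def intro: fext_ge_hinge)
  ultimately show ?thesis by simp
qed

lemma ereal_le_add_divide:
  fixes a b c x :: real
  assumes "c > 0" and "a - b \<le> x" and "ereal (c * x) \<le> D"
  shows "ereal a \<le> ereal b + D / ereal c"
proof (cases D)
  case (real d)
  then have "x \<le> d / c" using assms by (simp add: pos_le_divide_eq mult.commute)
  then show ?thesis using real assms by simp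
qed (use assms in auto)

theorem mainTheorem7:
  fixes P Q :: "'a measure" and f :: "real \<Rightarrow> real" and \<gamma> d1 d\<gamma> :: real and E :: "'a set"
  assumes "prob_space P" and "prob_space Q"
    and "sets P = sets Q"
    and "absolutely_continuous Q P"
    and "\<gamma> > 1"
    and "convex_on {0<..} f"
    and "f 1 = 0"
    and "(f has_real_derivative d1) (at 1)"
    and "(f has_real_derivative d\<gamma>) (at \<gamma>)"
    and "d\<gamma> > d1"
    and "E \<in> sets P"
  shows "ereal (measure P E) \<le> ereal (\<gamma> * measure Q E) + fdiv f P Q / ereal (d\<gamma> - d1)"
proof -
  interpret Q: prob_space Q by fact
  interpret P: prob_space P by fact
  define r where "r = (\<lambda>x. enn2real (RN_deriv Q P x))"
  have RN: "integrable Q (\<lambda>x. r x * g x)" "(\<integral>x. g x \<partial>P) = (\<integral>x. r x * g x \<partial>Q)"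
    if "integrable P g" "g \<in> borel_measurable Q" for g :: "'a \<Rightarrow> real"
    using Q.RN_deriv_integrable[OF _ assms(4,3), of g] Q.RN_deriv_integral[OF _ assms(4,3), of g]
      P.sigma_finite_measure that by (simp_all add: r_def)
  have RN_r: "integrable Q r" "(\<integral>x. r x \<partial>Q) = 1"
    using RN[of "\<lambda>_. 1"] P.prob_space by simp_all
  have "integrable P (indicator E :: 'a \<Rightarrow> real)"
    using assms(11) by (intro integrable_real_indicator) (auto simp: less_top[symmetric])
  then have "measure P E = (\<integral>x. r x * indicator E x \<partial>Q)"
    using RN[of "indicator E"] assms(3,11) by simp
  also have "\<dots> \<le> \<gamma> * measure Q E + (\<integral>x. max 0 (r x - \<gamma>) \<partial>Q)"
    using Q.integral_indicator_diff_le_excess[OF RN_r(1), of E \<gamma>] assms(3,11) by simp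
  finally have excess: "measure P E - \<gamma> * measure Q E \<le> (\<integral>x. max 0 (r x - \<gamma>) \<partial>Q)"
    by simp
  have "ereal ((d\<gamma> - d1) * (\<integral>x. max 0 (r x - \<gamma>) \<partial>Q)) \<le> fdiv f P Q"
    unfolding r_def using Q.fdiv_ge_excess[OF RN_r[unfolded r_def] assms(6,7,5,8,9)] .
  with excess show ?thesis
    using assms(10) by (intro ereal_le_add_divide) auto
qed

end
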